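(* Let $\mathbb{T}$ be a time scale, $\alpha\in]0,1]$, $t\in\mathbb{T}_\kappa^\kappa$, $\lambda\in\mathbb{R}$, and let $f,g:\mathbb{T}\to\mathbb{R}$ be symmetric fractional differentiable of order $\alpha$ at $t$. Then: (i) $f+g$ is symmetric fractional differentiable of order $\alpha$ at $t$ with $(f+g)^{\diamondsuit^\alpha}(t)=f^{\diamondsuit^\alpha}(t)+g^{\diamondsuit^\alpha}(t)$; (ii) $\lambda f$ is symmetric fractional differentiable of order $\alpha$ at $t$ with $(\lambda f)^{\diamondsuit^\alpha}(t)=\lambda f^{\diamondsuit^\alpha}(t)$; (iii) if $f$ and $g$ are continuous at $t$, then $fg$ is symmetric fractional differentiable of order $\alpha$ at $t$ with $(fg)^{\diamondsuit^\alpha}(t)=f^{\diamondsuit^\alpha}(t)g^\sigma(t)+f^\rho(t)g^{\diamondsuit^\alpha}(t)$; (iv) if $f$ is continuous at $t$ and $f^\sigma(t)f^\rho(t)\neq0$, then $1/f$ is symmetric fractional differentiable of order $\alpha$ at $t$ with $\left(\frac1f\right)^{\diamondsuit^\alpha}(t)=-\frac{f^{\diamondsuit^\alpha}(t)}{f^\sigma(t)f^\rho(t)}$; (v) if $f$ and $g$ are continuous at $t$ and $g^\sigma(t)g^\rho(t)\neq0$, then $f/g$ is symmetric fractional differentiable of order $\alpha$ at $t$ with $$\left(\frac fg\right)^{\diamondsuit^\alpha}(t)=\frac{f^{\diamondsuit^\alpha}(t)g^\rho(t)-f^\rho(t)g^{\diamondsuit^\alpha}(t)}{g^\sigma(t)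g^\rho(t)}.$$
   Context: A time scale $\mathbb{T}$ is a nonempty closed subset of $\mathbb{R}$ with the induced topology. $\sigma(t)=\inf\{s\in\mathbb{T}:s>t\}$ ($\inf\emptyset=\sup\mathbb{T}$), $\rho(t)=\sup\{s\in\mathbb{T}:s<t\}$ ($\sup\emptyset=\inf\mathbb{T}$); $f^\sigma=f\circ\sigma$, $f^\rho=f\circ\rho$. $\mathbb{T}^\kappa=\mathbb{T}\setminus\{\sup\mathbb{T}\}$ if $\sup\mathbb{T}$ is finite and left-scattered, else $\mathbb{T}$; $\mathbb{T}_\kappa=\mathbb{T}\setminus\{\inf\mathbb{T}\}$ if $\inf\mathbb{T}$ is finite and right-scattered, else $\mathbb{T}$; $\mathbb{T}_\kappa^\kappa=\mathbb{T}_\kappa\cap\mathbb{T}^\kappa$. Symmetric fractional derivative of order $\alpha$ at $t\in\mathbb{T}_\kappa^\kappa$: the real number $f^{\diamondsuit^\alpha}(t)$ (if it exists) such that for every $\varepsilon>0$ there is a neighborhood $U\subset\mathbb{T}$ of $t$ with $\big|[f^\sigma(t)-f(s)+f(2t-s)-f^\rho(t)]-f^{\diamondsuit^\alpha}(t)[\sigma(t)+2t-2s-\rho(t)]^\alpha\big|\le\varepsilon|\sigma(t)+2t-2s-\rho(t)|^\alpha$ for all $s\in U$ with $2t-s\in U$; $f$ is then symmetric fractional differentiable of order $\alpha$ at $t$. *)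

theory Defs
  imports "HOL-Analysis.Analysis"
begin

definition time_scale :: "real set \<Rightarrow> bool" where
  "time_scale T \<longleftrightarrow> T \<noteq> {} \<and> closed T"

definition sigma :: "real set \<Rightarrow> real \<Rightarrow> real" where
  "sigma T t = (if {s \<in> T. s > t} = {} then Sup T else Inf {s \<in> T. s > t})"

definition rho :: "real set \<Rightarrow> real \<Rightarrow> real" where
  "rho T t = (if {s \<in> T. s < t} = {} then Inf T else Sup {s \<in> T. s < t})"

definition T_sup_kappa :: "real set \<Rightarrow> real set" where
  "T_sup_kappa T = (if bdd_above T \<and> rho T (Sup T) < Sup T then T - {Sup T} else T)"

definition T_sub_kappa :: "real set \<Rightarrow> real set" where
  "T_sub_kappa T = (if bdd_below T \<and> Inf T < sigma T (Inf T) then T - {Inf T} else T)"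

definition T_kappa_kappa :: "real set \<Rightarrow> real set" where
  "T_kappa_kappa T = T_sub_kappa T \<inter> T_sup_kappa T"

text \<open>Real alpha-th power of a possibly negative base, read as the odd
  (sign preserving) extension of x powr alpha.\<close>
definition frac_pow :: "real \<Rightarrow> real \<Rightarrow> real" where
  "frac_pow \<alpha> x = sgn x * \<bar>x\<bar> powr \<alpha>"

definition has_sym_frac_deriv ::
    "real set \<Rightarrow> real \<Rightarrow> (real \<Rightarrow> real) \<Rightarrow> real \<Rightarrow> real \<Rightarrow> bool" where
  "has_sym_frac_deriv T \<alpha> f t D \<longleftrightarrow>
     (\<forall>\<epsilon>>0. \<exists>U. openin (top_of_set T) U \<and> t \<in> U \<and>
        (\<forall>s\<in>U. 2 * t - s \<in> U \<longrightarrow>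
           \<bar>(f (sigma T t) - f s + f (2 * t - s) - f (rho T t))
             - D * frac_pow \<alpha> (sigma T t + 2 * t - 2 * s - rho T t)\<bar>
           \<le> \<epsilon> * \<bar>sigma T t + 2 * t - 2 * s - rho T t\<bar> powr \<alpha>))"

end

theory Submission
  imports Defs
begin

text \<open>At a point \<open>t\<close> with \<open>\<sigma>(t) = \<rho>(t) = t\<close> the defining inequality says exactly that the
  symmetric quotient \<open>(f(2t - s) - f(s)) / (2t - 2s)\<^sup>\<alpha>\<close> tends to the derivative as \<open>s \<rightarrow> t\<close>
  through the points with \<open>s, 2t - s \<in> \<T>\<close>; the rules are then the limit laws, continuity
  supplying \<open>f(s) \<rightarrow> f(t)\<close> and \<open>g(2t - s) \<rightarrow> g(t)\<close>. At every other point of \<open>\<T>\<close> the jump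
  isolates \<open>t\<close> among these points, so the derivative is the number \<open>D\<close> with
  \<open>f\<^sup>\<sigma>(t) - f\<^sup>\<rho>(t) = D (\<sigma>(t) - \<rho>(t))\<^sup>\<alpha>\<close>, and the rules become algebraic identities.\<close>

lemma sigma_ge:
  assumes "t \<in> T"
  shows "t \<le> sigma T t"
proof (cases "{s \<in> T. s > t} = {}")
  case True
  then have "Sup T = t" using assms by (intro cSup_eq_maximum) force+
  with True show ?thesis by (simp add: sigma_def)
qed (auto simp: sigma_def intro: cInf_greatest)

lemma rho_le:
  assumes "t \<in> T"
  shows "rho T t \<le> t"
proof (cases "{s \<in> T. s < t} = {}")
  case True
  then have "Inf T = t" using assms by (intro cInf_eq_minimum) force+
  with True show ?thesis by (simp add: rho_def)
qed (auto simp: rho_def intro: cSup_least)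

lemma sigma_le:
  assumes "s \<in> T" "t < s"
  shows "sigma T t \<le> s"
proof -
  have "Inf {s \<in> T. s > t} \<le> s"
    using assms by (intro cInf_lower) (auto intro: bdd_belowI[where m = t])
  then show ?thesis using assms by (auto simp: sigma_def)
qed

lemma rho_ge:
  assumes "s \<in> T" "s < t"
  shows "s \<le> rho T t"
proof -
  have "s \<le> Sup {s \<in> T. s < t}"
    using assms by (intro cSup_upper) (auto intro: bdd_aboveI[where M = t])
  then show ?thesis using assms by (auto simp: rho_def)
qed

definition sym_domain :: "real set \<Rightarrow> real \<Rightarrow> real set" where
  "sym_domain T t = {s \<in> T. 2 * t - s \<in> T}"

definition sym_diff :: "real set \<Rightarrow> (real \<Rightarrow> real) \<Rightarrow> real \<Rightarrow> real \<Rightarrow> real" where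
  "sym_diff T F t s = F (sigma T t) - F s + F (2 * t - s) - F (rho T t)"

definition sym_step :: "real set \<Rightarrow> real \<Rightarrow> real \<Rightarrow> real" where
  "sym_step T t s = sigma T t + 2 * t - 2 * s - rho T t"

lemma sym_domain_subset: "sym_domain T t \<subseteq> T"
  by (auto simp: sym_domain_def)

lemma has_sym_frac_deriv_altdef:
  "has_sym_frac_deriv T \<alpha> F t D \<longleftrightarrow>
    (\<forall>\<epsilon>>0. \<exists>U. openin (top_of_set T) U \<and> t \<in> U \<and>
       (\<forall>s\<in>U. 2 * t - s \<in> U \<longrightarrow>
          \<bar>sym_diff T F t s - D * frac_pow \<alpha> (sym_step T t s)\<bar> \<le> \<epsilon> * \<bar>sym_step T t s\<bar> powr \<alpha>))"
  by (simp add: has_sym_frac_deriv_def sym_diff_def sym_step_def)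

lemma has_sym_frac_deriv_iff_eventually:
  "has_sym_frac_deriv T \<alpha> F t D \<longleftrightarrow> t \<in> T \<and>
    (\<forall>\<epsilon>>0. \<forall>\<^sub>F s in inf (nhds t) (principal (sym_domain T t)).
       \<bar>sym_diff T F t s - D * frac_pow \<alpha> (sym_step T t s)\<bar> \<le> \<epsilon> * \<bar>sym_step T t s\<bar> powr \<alpha>)"
  (is "_ \<longleftrightarrow> _ \<and> (\<forall>\<epsilon>>0. eventually (?P \<epsilon>) ?N)")
  unfolding has_sym_frac_deriv_altdef
proof safe
  assume nbhd: "\<forall>\<epsilon>>0. \<exists>U. openin (top_of_set T) U \<and> t \<in> U \<and> (\<forall>s\<in>U. 2 * t - s \<in> U \<longrightarrow> ?P \<epsilon> s)"
  then obtain U where U: "openin (top_of_set T) U" "t \<in> U"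
    using zero_less_one by blast
  show "t \<in> T" using openin_imp_subset[OF U(1)] U(2) by (rule subsetD)
  fix \<epsilon> :: real assume "\<epsilon> > 0"
  then obtain U where U: "openin (top_of_set T) U" "t \<in> U"
    and P: "\<forall>s\<in>U. 2 * t - s \<in> U \<longrightarrow> ?P \<epsilon> s"
    using nbhd by blast
  obtain d where "d > 0" and d: "ball t d \<inter> T \<subseteq> U"
    using U unfolding openin_contains_ball by blast
  have "?P \<epsilon> s" if "dist s t < d" "s \<in> sym_domain T t" for s
  proof (rule P[rule_format])
    show "s \<in> U" "2 * t - s \<in> U"
      using that d by (auto simp: sym_domain_def dist_real_def)
  qed
  with \<open>d > 0\<close> show "eventually (?P \<epsilon>) ?N"
    unfolding eventually_inf_principal eventually_nhds_metric by blast
next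
  fix \<epsilon> :: real
  assume "t \<in> T" "\<forall>\<epsilon>>0. eventually (?P \<epsilon>) ?N" "\<epsilon> > 0"
  then obtain d where "d > 0" and d: "\<And>s. dist s t < d \<Longrightarrow> s \<in> sym_domain T t \<Longrightarrow> ?P \<epsilon> s"
    unfolding eventually_inf_principal eventually_nhds_metric by blast
  show "\<exists>U. openin (top_of_set T) U \<and> t \<in> U \<and> (\<forall>s\<in>U. 2 * t - s \<in> U \<longrightarrow> ?P \<epsilon> s)"
  proof (intro exI[of _ "T \<inter> ball t d"] conjI ballI impI)
    show "openin (top_of_set T) (T \<inter> ball t d)" by (simp add: openin_open_Int)
    show "t \<in> T \<inter> ball t d" using \<open>t \<in> T\<close> \<open>d > 0\<close> by simp
    fix s assume "s \<in> T \<inter> ball t d" "2 * t - s \<in> T \<inter> ball t d"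
    then show "?P \<epsilon> s" by (intro d) (auto simp: sym_domain_def dist_commute)
  qed
qed

lemma tendsto_iff_eventually_le:
  fixes f :: "'a \<Rightarrow> real"
  shows "(f \<longlongrightarrow> l) F \<longleftrightarrow> (\<forall>\<epsilon>>0. \<forall>\<^sub>F x in F. \<bar>f x - l\<bar> \<le> \<epsilon>)"
  unfolding tendsto_iff dist_real_def
proof safe
  fix \<epsilon> :: real
  assume "\<forall>\<epsilon>>0. \<forall>\<^sub>F x in F. \<bar>f x - l\<bar> \<le> \<epsilon>" "\<epsilon> > 0"
  then have "\<forall>\<^sub>F x in F. \<bar>f x - l\<bar> \<le> \<epsilon> / 2" by (metis half_gt_zero)
  then show "\<forall>\<^sub>F x in F. \<bar>f x - l\<bar> < \<epsilon>"
    by (rule eventually_mono) (use \<open>\<epsilon> > 0\<close> in linarith)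
next
  fix \<epsilon> :: real
  assume "\<forall>\<epsilon>>0. \<forall>\<^sub>F x in F. \<bar>f x - l\<bar> < \<epsilon>" "\<epsilon> > 0"
  then have "\<forall>\<^sub>F x in F. \<bar>f x - l\<bar> < \<epsilon>" by blast
  then show "\<forall>\<^sub>F x in F. \<bar>f x - l\<bar> \<le> \<epsilon>" by (rule eventually_mono) simp
qed

lemma abs_frac_pow: "\<bar>frac_pow \<alpha> x\<bar> = \<bar>x\<bar> powr \<alpha>"
  by (simp add: frac_pow_def abs_mult abs_sgn_eq)

lemma has_sym_frac_deriv_dense_iff_tendsto:
  assumes "sigma T t = t" "rho T t = t"
  shows "has_sym_frac_deriv T \<alpha> F t D \<longleftrightarrow> t \<in> T \<and>
    ((\<lambda>s. (F (2 * t - s) - F s) / frac_pow \<alpha> (2 * t - 2 * s)) \<longlongrightarrow> D) (at t within sym_domain T t)"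
proof -
  define q where "q s = (F (2 * t - s) - F s) / frac_pow \<alpha> (2 * t - 2 * s)" for s
  have pointwise: "\<bar>sym_diff T F t s - D * frac_pow \<alpha> (sym_step T t s)\<bar> \<le> \<epsilon> * \<bar>sym_step T t s\<bar> powr \<alpha>
      \<longleftrightarrow> (s \<noteq> t \<longrightarrow> \<bar>q s - D\<bar> \<le> \<epsilon>)" for s \<epsilon>
  proof (cases "s = t")
    case False
    define p where "p = frac_pow \<alpha> (2 * t - 2 * s)"
    have "\<bar>p\<bar> > 0" using False by (simp add: p_def abs_frac_pow)
    have "q s = (F (2 * t - s) - F s) / p" by (simp add: q_def p_def)
    then have "F (2 * t - s) - F s - D * p = p * (q s - D)"
      using \<open>\<bar>p\<bar> > 0\<close> by (simp add: field_simps)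
    then have "\<bar>F (2 * t - s) - F s - D * p\<bar> = \<bar>p\<bar> * \<bar>q s - D\<bar>"
      by (simp add: abs_mult)
    with \<open>\<bar>p\<bar> > 0\<close> False show ?thesis
      using assms by (simp add: sym_diff_def sym_step_def p_def abs_frac_pow[symmetric])
  qed (use assms in \<open>simp add: sym_diff_def sym_step_def frac_pow_def\<close>) \<comment> \<open>at \<open>s = t\<close> both sides vanish\<close>
  show ?thesis
    unfolding has_sym_frac_deriv_iff_eventually tendsto_iff_eventually_le
      eventually_inf_principal eventually_at_filter pointwise q_def
    by (simp add: imp_conjL[symmetric] conj_commute)
qed

lemma sym_domain_jump_bounds:
  assumes "s \<in> sym_domain T t" "s \<noteq> t"
  shows "sigma T t \<le> t + \<bar>s - t\<bar>" "t - \<bar>s - t\<bar> \<le> rho T t"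
proof -
  have "s \<in> T" "2 * t - s \<in> T" using assms(1) by (auto simp: sym_domain_def)
  then have "sigma T t \<le> t + \<bar>s - t\<bar> \<and> t - \<bar>s - t\<bar> \<le> rho T t"
    using assms(2) sigma_le[of s T t] sigma_le[of "2 * t - s" T t]
      rho_ge[of s T t] rho_ge[of "2 * t - s" T t]
    by (cases "s < t") auto
  then show "sigma T t \<le> t + \<bar>s - t\<bar>" "t - \<bar>s - t\<bar> \<le> rho T t" by auto
qed

lemma eventually_sym_domain_scattered:
  assumes "t < sigma T t \<or> rho T t < t"
  shows "\<forall>\<^sub>F s in inf (nhds t) (principal (sym_domain T t)). s = t"
proof -
  define \<delta> where "\<delta> = max (sigma T t - t) (t - rho T t)"
  have "\<delta> > 0" using assms by (auto simp: \<delta>_def)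
  moreover have "s = t" if "dist s t < \<delta>" "s \<in> sym_domain T t" for s
    using that sym_domain_jump_bounds[of s T t] by (force simp: \<delta>_def dist_real_def)
  ultimately show ?thesis
    unfolding eventually_inf_principal eventually_nhds_metric by blast
qed

lemma has_sym_frac_deriv_scattered_iff:
  assumes "t \<in> T" "t < sigma T t \<or> rho T t < t"
  shows "has_sym_frac_deriv T \<alpha> F t D \<longleftrightarrow>
    F (sigma T t) - F (rho T t) = D * frac_pow \<alpha> (sigma T t - rho T t)"
proof -
  have "t \<in> sym_domain T t" using assms(1) by (simp add: sym_domain_def)
  then have at_t: "eventually P (inf (nhds t) (principal (sym_domain T t))) \<longleftrightarrow> P t" for P
    using eventually_mono[OF eventually_sym_domain_scattered[OF assms(2)], of P]
    by (auto simp: eventually_inf_principal eventually_nhds_metric)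
  define X where "X = F (sigma T t) - F (rho T t) - D * frac_pow \<alpha> (sigma T t - rho T t)"
  define c where "c = \<bar>sigma T t - rho T t\<bar> powr \<alpha>"
  have "(\<forall>\<epsilon>>0. \<bar>X\<bar> \<le> \<epsilon> * c) \<longleftrightarrow> X = 0"
  proof
    assume small: "\<forall>\<epsilon>>0. \<bar>X\<bar> \<le> \<epsilon> * c"
    have "c \<ge> 0" by (simp add: c_def)
    show "X = 0"
    proof (rule ccontr)
      assume "X \<noteq> 0"
      then have "\<bar>X\<bar> / (c + 1) > 0" using \<open>c \<ge> 0\<close> by (simp add: add_nonneg_pos)
      then have "\<bar>X\<bar> \<le> \<bar>X\<bar> / (c + 1) * c" using small by blast
      also have "\<dots> < \<bar>X\<bar>" using \<open>X \<noteq> 0\<close> \<open>c \<ge> 0\<close> by (simp add: field_simps)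
      finally show False by simp
    qed
  qed (simp add: c_def)
  then show ?thesis
    unfolding has_sym_frac_deriv_iff_eventually at_t
    using assms(1) by (simp add: sym_diff_def sym_step_def X_def c_def)
qed

lemma sym_diff_add: "sym_diff T (\<lambda>x. f x + g x) t s = sym_diff T f t s + sym_diff T g t s"
  by (simp add: sym_diff_def)

lemma has_sym_frac_deriv_add:
  assumes "has_sym_frac_deriv T \<alpha> f t Df" "has_sym_frac_deriv T \<alpha> g t Dg"
  shows "has_sym_frac_deriv T \<alpha> (\<lambda>x. f x + g x) t (Df + Dg)"
  unfolding has_sym_frac_deriv_iff_eventually
proof (intro conjI allI impI)
  note f = assms(1)[unfolded has_sym_frac_deriv_iff_eventually]
  note g = assms(2)[unfolded has_sym_frac_deriv_iff_eventually]
  show "t \<in> T" using f by blast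
  fix \<epsilon> :: real assume "\<epsilon> > 0"
  then have "\<epsilon> / 2 > 0" by simp
  have "\<forall>\<^sub>F s in inf (nhds t) (principal (sym_domain T t)).
      \<bar>sym_diff T f t s - Df * frac_pow \<alpha> (sym_step T t s)\<bar> \<le> \<epsilon> / 2 * \<bar>sym_step T t s\<bar> powr \<alpha> \<and>
      \<bar>sym_diff T g t s - Dg * frac_pow \<alpha> (sym_step T t s)\<bar> \<le> \<epsilon> / 2 * \<bar>sym_step T t s\<bar> powr \<alpha>"
    by (intro eventually_conj f[THEN conjunct2, rule_format] g[THEN conjunct2, rule_format] \<open>\<epsilon> / 2 > 0\<close>)
  then show "\<forall>\<^sub>F s in inf (nhds t) (principal (sym_domain T t)).
      \<bar>sym_diff T (\<lambda>x. f x + g x) t s - (Df + Dg) * frac_pow \<alpha> (sym_step T t s)\<bar>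
        \<le> \<epsilon> * \<bar>sym_step T t s\<bar> powr \<alpha>"
    unfolding sym_diff_add distrib_right
    by (rule eventually_mono) (unfold abs_le_iff, linarith)
qed

lemma sym_diff_cmult: "sym_diff T (\<lambda>x. c * f x) t s = c * sym_diff T f t s"
  by (simp add: sym_diff_def algebra_simps)

lemma has_sym_frac_deriv_cmult:
  assumes "has_sym_frac_deriv T \<alpha> f t Df"
  shows "has_sym_frac_deriv T \<alpha> (\<lambda>x. c * f x) t (c * Df)"
  unfolding has_sym_frac_deriv_iff_eventually
proof (intro conjI allI impI)
  note f = assms[unfolded has_sym_frac_deriv_iff_eventually]
  show "t \<in> T" using f by blast
  fix \<epsilon> :: real assume "\<epsilon> > 0"
  then have "\<epsilon> / (\<bar>c\<bar> + 1) > 0" by (simp add: add_nonneg_pos)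
  then have "\<forall>\<^sub>F s in inf (nhds t) (principal (sym_domain T t)).
      \<bar>sym_diff T f t s - Df * frac_pow \<alpha> (sym_step T t s)\<bar>
        \<le> \<epsilon> / (\<bar>c\<bar> + 1) * \<bar>sym_step T t s\<bar> powr \<alpha>"
    by (rule f[THEN conjunct2, rule_format])
  then show "\<forall>\<^sub>F s in inf (nhds t) (principal (sym_domain T t)).
      \<bar>sym_diff T (\<lambda>x. c * f x) t s - c * Df * frac_pow \<alpha> (sym_step T t s)\<bar>
        \<le> \<epsilon> * \<bar>sym_step T t s\<bar> powr \<alpha>"
  proof (rule eventually_mono)
    fix s
    define k where "k = \<bar>sym_step T t s\<bar> powr \<alpha>"
    assume h: "\<bar>sym_diff T f t s - Df * frac_pow \<alpha> (sym_step T t s)\<bar> \<le> \<epsilon> / (\<bar>c\<bar> + 1) * k"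
    have "sym_diff T (\<lambda>x. c * f x) t s - c * Df * frac_pow \<alpha> (sym_step T t s)
        = c * (sym_diff T f t s - Df * frac_pow \<alpha> (sym_step T t s))"
      by (simp add: sym_diff_cmult algebra_simps)
    then have "\<bar>sym_diff T (\<lambda>x. c * f x) t s - c * Df * frac_pow \<alpha> (sym_step T t s)\<bar>
        = \<bar>c\<bar> * \<bar>sym_diff T f t s - Df * frac_pow \<alpha> (sym_step T t s)\<bar>"
      by (simp add: abs_mult)
    also have "\<dots> \<le> \<bar>c\<bar> * (\<epsilon> / (\<bar>c\<bar> + 1) * k)"
      using h by (rule mult_left_mono) simp
    also have "\<dots> = \<bar>c\<bar> / (\<bar>c\<bar> + 1) * (\<epsilon> * k)" by simp
    also have "\<dots> \<le> \<epsilon> * k"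
      using \<open>\<epsilon> > 0\<close> by (intro mult_left_le_one_le) (auto simp: k_def)
    finally show "\<bar>sym_diff T (\<lambda>x. c * f x) t s - c * Df * frac_pow \<alpha> (sym_step T t s)\<bar>
        \<le> \<epsilon> * \<bar>sym_step T t s\<bar> powr \<alpha>" by (simp add: k_def)
  qed
qed

lemma has_sym_frac_deriv_imp_mem: "has_sym_frac_deriv T \<alpha> F t D \<Longrightarrow> t \<in> T"
  by (simp add: has_sym_frac_deriv_iff_eventually)

lemma dense_or_scattered_point:
  assumes "t \<in> T"
  obtains (dense) "sigma T t = t" "rho T t = t" | (scattered) "t < sigma T t \<or> rho T t < t"
  using sigma_ge[OF assms] rho_le[OF assms] by linarith

lemma continuous_within_tendsto_sym_domain:
  assumes "continuous (at t within T) F"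
  shows "(F \<longlongrightarrow> F t) (at t within sym_domain T t)"
    and "((\<lambda>s. F (2 * t - s)) \<longlongrightarrow> F t) (at t within sym_domain T t)"
proof -
  show "(F \<longlongrightarrow> F t) (at t within sym_domain T t)"
    using continuous_within_subset[OF assms sym_domain_subset] by (simp add: continuous_within)
  have "(\<lambda>s. 2 * t - s) ` sym_domain T t \<subseteq> T" by (auto simp: sym_domain_def)
  then have "continuous (at ((\<lambda>s. 2 * t - s) t) within (\<lambda>s. 2 * t - s) ` sym_domain T t) F"
    using continuous_within_subset[OF assms] by simp
  moreover have "continuous (at t within sym_domain T t) (\<lambda>s. 2 * t - s)"
    by (simp add: continuous_diff)
  ultimately have "continuous (at t within sym_domain T t) (\<lambda>s. F (2 * t - s))"
    using continuous_within_compose2 by blast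
  then show "((\<lambda>s. F (2 * t - s)) \<longlongrightarrow> F t) (at t within sym_domain T t)"
    by (simp add: continuous_within)
qed

lemma has_sym_frac_deriv_mult_dense:
  assumes dense: "sigma T t = t" "rho T t = t"
    and F: "has_sym_frac_deriv T \<alpha> F t Df" and G: "has_sym_frac_deriv T \<alpha> G t Dg"
    and cF: "continuous (at t within T) F" and cG: "continuous (at t within T) G"
  shows "has_sym_frac_deriv T \<alpha> (\<lambda>x. F x * G x) t (Df * G t + F t * Dg)"
proof -
  let ?q = "\<lambda>H s. (H (2 * t - s) - H s) / frac_pow \<alpha> (2 * t - 2 * s)"
  note dense_iff = has_sym_frac_deriv_dense_iff_tendsto[OF dense]
  have "t \<in> T" and qF: "(?q F \<longlongrightarrow> Df) (at t within sym_domain T t)"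
    and qG: "(?q G \<longlongrightarrow> Dg) (at t within sym_domain T t)"
    using F G unfolding dense_iff by auto
  have "((\<lambda>s. ?q F s * G (2 * t - s) + F s * ?q G s) \<longlongrightarrow> Df * G t + F t * Dg)
      (at t within sym_domain T t)"
    using continuous_within_tendsto_sym_domain[OF cF] continuous_within_tendsto_sym_domain[OF cG]
    by (intro tendsto_add tendsto_mult qF qG)
  moreover have "?q (\<lambda>x. F x * G x) s = ?q F s * G (2 * t - s) + F s * ?q G s" for s
    by (simp add: diff_divide_distrib algebra_simps)
  ultimately show ?thesis using \<open>t \<in> T\<close> unfolding dense_iff by simp
qed

lemma has_sym_frac_deriv_inverse_dense:
  assumes dense: "sigma T t = t" "rho T t = t"
    and F: "has_sym_frac_deriv T \<alpha> F t Df"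
    and cF: "continuous (at t within T) F" and "F t \<noteq> 0"
  shows "has_sym_frac_deriv T \<alpha> (\<lambda>x. 1 / F x) t (- Df / (F t * F t))"
proof -
  let ?q = "\<lambda>H s. (H (2 * t - s) - H s) / frac_pow \<alpha> (2 * t - 2 * s)"
  note dense_iff = has_sym_frac_deriv_dense_iff_tendsto[OF dense]
  note F_lim = continuous_within_tendsto_sym_domain[OF cF]
  have "t \<in> T" and qF: "(?q F \<longlongrightarrow> Df) (at t within sym_domain T t)"
    using F unfolding dense_iff by auto
  have "((\<lambda>s. - ?q F s / (F (2 * t - s) * F s)) \<longlongrightarrow> - Df / (F t * F t))
      (at t within sym_domain T t)"
    using \<open>F t \<noteq> 0\<close> by (intro tendsto_divide tendsto_minus tendsto_mult qF F_lim(2) F_lim(1)) simp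
  moreover have "\<forall>\<^sub>F s in at t within sym_domain T t. F s \<noteq> 0 \<and> F (2 * t - s) \<noteq> 0"
    using \<open>F t \<noteq> 0\<close> tendsto_imp_eventually_ne[OF F_lim(1)] tendsto_imp_eventually_ne[OF F_lim(2)]
    by (intro eventually_conj)
  then have "\<forall>\<^sub>F s in at t within sym_domain T t.
      - ?q F s / (F (2 * t - s) * F s) = ?q (\<lambda>x. 1 / F x) s"
    by (rule eventually_mono) (simp add: diff_divide_distrib divide_divide_eq_left algebra_simps)
  ultimately have "(?q (\<lambda>x. 1 / F x) \<longlongrightarrow> - Df / (F t * F t)) (at t within sym_domain T t)"
    by (rule Lim_transform_eventually)
  with \<open>t \<in> T\<close> show ?thesis unfolding dense_iff by simp
qed

lemma has_sym_frac_deriv_mult: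
  assumes F: "has_sym_frac_deriv T \<alpha> F t Df" and G: "has_sym_frac_deriv T \<alpha> G t Dg"
    and cF: "continuous (at t within T) F" and cG: "continuous (at t within T) G"
  shows "has_sym_frac_deriv T \<alpha> (\<lambda>x. F x * G x) t (Df * G (sigma T t) + F (rho T t) * Dg)"
  using has_sym_frac_deriv_imp_mem[OF F]
proof (cases rule: dense_or_scattered_point)
  case dense
  then show ?thesis using has_sym_frac_deriv_mult_dense[OF dense F G cF cG] by simp
next
  case scattered
  note scattered_iff = has_sym_frac_deriv_scattered_iff[OF has_sym_frac_deriv_imp_mem[OF F] scattered]
  have "F (sigma T t) * G (sigma T t) - F (rho T t) * G (rho T t)
      = (F (sigma T t) - F (rho T t)) * G (sigma T t) + F (rho T t) * (G (sigma T t) - G (rho T t))"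
    by (simp add: algebra_simps)
  also have "\<dots> = (Df * G (sigma T t) + F (rho T t) * Dg) * frac_pow \<alpha> (sigma T t - rho T t)"
    unfolding F[unfolded scattered_iff] G[unfolded scattered_iff] by (simp add: algebra_simps)
  finally show ?thesis unfolding scattered_iff .
qed

lemma has_sym_frac_deriv_inverse:
  assumes F: "has_sym_frac_deriv T \<alpha> F t Df"
    and cF: "continuous (at t within T) F" and nz: "F (sigma T t) * F (rho T t) \<noteq> 0"
  shows "has_sym_frac_deriv T \<alpha> (\<lambda>x. 1 / F x) t (- Df / (F (sigma T t) * F (rho T t)))"
  using has_sym_frac_deriv_imp_mem[OF F]
proof (cases rule: dense_or_scattered_point)
  case dense
  then show ?thesis using has_sym_frac_deriv_inverse_dense[OF dense F cF] nz by simp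
next
  case scattered
  note scattered_iff = has_sym_frac_deriv_scattered_iff[OF has_sym_frac_deriv_imp_mem[OF F] scattered]
  have "1 / F (sigma T t) - 1 / F (rho T t)
      = - (F (sigma T t) - F (rho T t)) / (F (sigma T t) * F (rho T t))"
    using nz by (simp add: field_simps)
  also have "\<dots> = - Df / (F (sigma T t) * F (rho T t)) * frac_pow \<alpha> (sigma T t - rho T t)"
    unfolding F[unfolded scattered_iff] by simp
  finally show ?thesis unfolding scattered_iff .
qed

lemma has_sym_frac_deriv_divide:
  assumes F: "has_sym_frac_deriv T \<alpha> F t Df" and G: "has_sym_frac_deriv T \<alpha> G t Dg"
    and cF: "continuous (at t within T) F" and cG: "continuous (at t within T) G"
    and nz: "G (sigma T t) * G (rho T t) \<noteq> 0"
  shows "has_sym_frac_deriv T \<alpha> (\<lambda>x. F x / G x) t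
    ((Df * G (rho T t) - F (rho T t) * Dg) / (G (sigma T t) * G (rho T t)))"
  using has_sym_frac_deriv_imp_mem[OF F]
proof (cases rule: dense_or_scattered_point)
  case dense
  then have "G t \<noteq> 0" using nz by simp
  then have "continuous (at t within T) (\<lambda>x. 1 / G x)"
    using cG unfolding continuous_within by (intro tendsto_divide tendsto_const)
  with has_sym_frac_deriv_inverse_dense[OF dense G cG \<open>G t \<noteq> 0\<close>]
  have "has_sym_frac_deriv T \<alpha> (\<lambda>x. F x * (1 / G x)) t (Df * (1 / G t) + F t * (- Dg / (G t * G t)))"
    by (intro has_sym_frac_deriv_mult_dense[OF dense F _ cF])
  moreover have "Df * (1 / G t) + F t * (- Dg / (G t * G t)) = (Df * G t - F t * Dg) / (G t * G t)"
    using \<open>G t \<noteq> 0\<close> by (simp add: field_simps)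
  ultimately show ?thesis using dense by simp
next
  case scattered
  note scattered_iff = has_sym_frac_deriv_scattered_iff[OF has_sym_frac_deriv_imp_mem[OF F] scattered]
  have "F (sigma T t) / G (sigma T t) - F (rho T t) / G (rho T t)
      = ((F (sigma T t) - F (rho T t)) * G (rho T t) - F (rho T t) * (G (sigma T t) - G (rho T t)))
        / (G (sigma T t) * G (rho T t))"
    using nz by (simp add: field_simps)
  also have "\<dots> = (Df * G (rho T t) - F (rho T t) * Dg) / (G (sigma T t) * G (rho T t))
      * frac_pow \<alpha> (sigma T t - rho T t)"
    unfolding F[unfolded scattered_iff] G[unfolded scattered_iff] by (simp add: algebra_simps)
  finally show ?thesis unfolding scattered_iff .
qed

theorem theorem3p26:
  fixes T :: "real set" and \<alpha> c t Df Dg :: real and f g :: "real \<Rightarrow> real"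
  assumes "time_scale T"
    and "0 < \<alpha>" and "\<alpha> \<le> 1"
    and "t \<in> T_kappa_kappa T"
    and "has_sym_frac_deriv T \<alpha> f t Df"
    and "has_sym_frac_deriv T \<alpha> g t Dg"
  shows "has_sym_frac_deriv T \<alpha> (\<lambda>x. f x + g x) t (Df + Dg)
    \<and> has_sym_frac_deriv T \<alpha> (\<lambda>x. c * f x) t (c * Df)
    \<and> (continuous (at t within T) f \<and> continuous (at t within T) g \<longrightarrow>
         has_sym_frac_deriv T \<alpha> (\<lambda>x. f x * g x) t
           (Df * g (sigma T t) + f (rho T t) * Dg))
    \<and> (continuous (at t within T) f \<and> f (sigma T t) * f (rho T t) \<noteq> 0 \<longrightarrow>
         has_sym_frac_deriv T \<alpha> (\<lambda>x. 1 / f x) t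
           (- Df / (f (sigma T t) * f (rho T t))))
    \<and> (continuous (at t within T) f \<and> continuous (at t within T) g \<and>
         g (sigma T t) * g (rho T t) \<noteq> 0 \<longrightarrow>
         has_sym_frac_deriv T \<alpha> (\<lambda>x. f x / g x) t
           ((Df * g (rho T t) - f (rho T t) * Dg) / (g (sigma T t) * g (rho T t))))"
  using has_sym_frac_deriv_add[OF assms(5,6)] has_sym_frac_deriv_cmult[OF assms(5)]
    has_sym_frac_deriv_mult[OF assms(5,6)] has_sym_frac_deriv_inverse[OF assms(5)]
    has_sym_frac_deriv_divide[OF assms(5,6)]
  by blast

end
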